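(* Let $p\ge 2$ and let $J$ be a periodic Jacobi operator on $\ell^2(\mathbb{Z})$ with period $p$, given by $(J\psi)_n=a_{n-1}\psi_{n-1}+b_n\psi_n+a_n\psi_{n+1}$, where $a_n>0$, $b_n\in\mathbb{R}$, $a_{n+p}=a_n$, $b_{n+p}=b_n$ for all $n$. Let $A:=(a_1\cdots a_p)^{1/p}$, and let $\sigma_n$ ($1\le n\le p$) and $\gamma_n$ ($1\le n\le p-1$) be the spectral bands and gaps of $J$. If $d>0$ satisfies $\min_{1\le n\le p-1}|\gamma_n|\ge d$, then $$\frac{1}{\log^+(d/A)}\ge\sum_{n=1}^{p}\frac{1}{\log^+\big(4d/|\sigma_n|\big)}.$$
   Context: $\log^+x:=\max\{\log x,0\}$, with the convention $1/0=+\infty$. Spectral structure: the spectrum of $J$ is $\sigma(J)=\{\lambda\in\mathbb{R}: |\Delta(\lambda)|\le 2\}$, where $\Delta(\lambda)=\operatorname{tr}\big(A_p(\lambda)A_{p-1}(\lambda)\cdots A_1(\lambda)\big)$ with $A_n(\lambda)=\begin{pmatrix}(\lambda-b_n)/a_n & -a_{n-1}/a_n\\ 1&0\end{pmatrix}$ (the discriminant, a real polynomial of degree $p$). It is a standard fact that this set is a union of $p$ closed intervals (bands) $\sigma_n=[\lambda_n^{\min},\lambda_n^{\max}]$, $1\le n\le p$, with $\lambda_n^{\min}<\lambda_n^{\max}\le\lambda_{n+1}^{\min}$ (bands may touch but do not overlap); on each band $\Delta$ is monotone and maps it onto $[-2,2]$. The spectral gaps are $\gamma_n=(\lambda_n^{\max},\lambda_{n+1}^{\min})$,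 $1\le n\le p-1$ (possibly empty). $|\cdot|$ denotes Lebesgue measure (length). *)

theory Defs
  imports "HOL-Analysis.Analysis"
begin

text \<open>One-step transfer matrix A_n(lambda) of the Jacobi operator with
  off-diagonal coefficients a and diagonal coefficients b (indexed by int).\<close>
definition transfer_matrix :: "(int \<Rightarrow> real) \<Rightarrow> (int \<Rightarrow> real) \<Rightarrow> int \<Rightarrow> real \<Rightarrow> real^2^2" where
  "transfer_matrix a b n lam =
     vector [vector [(lam - b n) / a n, - a (n - 1) / a n], vector [1, 0]]"

fun transfer_prod :: "(int \<Rightarrow> real) \<Rightarrow> (int \<Rightarrow> real) \<Rightarrow> nat \<Rightarrow> real \<Rightarrow> real^2^2" where
  "transfer_prod a b 0 lam = mat 1"
| "transfer_prod a b (Suc k) lam = transfer_matrix a b (int (Suc k)) lam ** transfer_prod a b k lam"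

definition trace2 :: "real^2^2 \<Rightarrow> real" where
  "trace2 M = (\<Sum>i\<in>UNIV. M $ i $ i)"

definition discriminant :: "(int \<Rightarrow> real) \<Rightarrow> (int \<Rightarrow> real) \<Rightarrow> nat \<Rightarrow> real \<Rightarrow> real" where
  "discriminant a b p lam = trace2 (transfer_prod a b p lam)"

definition jacobi_spectrum :: "(int \<Rightarrow> real) \<Rightarrow> (int \<Rightarrow> real) \<Rightarrow> nat \<Rightarrow> real set" where
  "jacobi_spectrum a b p = {lam. \<bar>discriminant a b p lam\<bar> \<le> 2}"

text \<open>The band decomposition: lmin n, lmax n (1 <= n <= p) are the endpoints of
  the bands sigma_n = [lmin n, lmax n], which are ordered, may touch but not overlap,
  cover the spectrum, and on each of which Delta is monotone onto [-2,2].\<close>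
definition is_band_decomposition ::
  "(int \<Rightarrow> real) \<Rightarrow> (int \<Rightarrow> real) \<Rightarrow> nat \<Rightarrow> (nat \<Rightarrow> real) \<Rightarrow> (nat \<Rightarrow> real) \<Rightarrow> bool" where
  "is_band_decomposition a b p lmin lmax \<longleftrightarrow>
     jacobi_spectrum a b p = (\<Union>n\<in>{1..p}. {lmin n..lmax n}) \<and>
     (\<forall>n\<in>{1..p}. lmin n < lmax n) \<and>
     (\<forall>n\<in>{1..<p}. lmax n \<le> lmin (Suc n)) \<and>
     (\<forall>n\<in>{1..p}. (mono_on {lmin n..lmax n} (discriminant a b p)
                     \<or> antimono_on {lmin n..lmax n} (discriminant a b p))
                   \<and> discriminant a b p ` {lmin n..lmax n} = {-2..2})"

text \<open>1 / log^+ x, with log^+ x = max (log x) 0 and the convention 1/0 = +infinity.\<close>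
definition inv_logplus :: "real \<Rightarrow> ereal" where
  "inv_logplus x = (if max (ln x) 0 = 0 then \<infinity> else ereal (1 / max (ln x) 0))"

end

theory Submission
  imports Defs "HOL-Computational_Algebra.Polynomial"
begin

text \<open>The discriminant is a real polynomial of degree p with leading coefficient
  1/(a_1 \<cdots> a_p) = A^-p. Every band contains a zero of it, and the gaps keep these p zeros r_n
  apart, so Delta(lam) = A^-p \<Prod>(lam - r_n). For lam in the band sigma_m the other p - 1 factors
  are at least d while |Delta(lam)| \<le> 2, hence |lam - r_m| d^(p-1) \<le> 2 A^p and
  |sigma_m| d^(p-1) \<le> 4 A^p, i.e. 4d/|sigma_m| \<ge> (d/A)^p. Since 1/log^+ is antitone and
  1/log^+((d/A)^p) = 1/(p log^+(d/A)), summing the p terms gives the claim.\<close>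

lemma poly_eq_lead_coeff_prod_roots:
  fixes q :: "'a :: idom poly"
  assumes "finite R" "card R = degree q" "\<And>r. r \<in> R \<Longrightarrow> poly q r = 0"
  shows "poly q x = lead_coeff q * (\<Prod>r\<in>R. x - r)"
proof -
  define m where "m = (\<Prod>r\<in>R. [:-r, 1:])"
  have "lead_coeff m = 1"
    by (simp add: m_def lead_coeff_prod)
  moreover have "degree m = degree q"
    using assms(2) by (simp add: m_def degree_prod_eq_sum_degree)
  ultimately have q: "q = smult (lead_coeff q) m"
    by (intro poly_eqI_degree_lead_coeff[where A = R and n = "degree q"])
       (use assms in \<open>auto simp: m_def poly_prod\<close>)
  have "poly q x = lead_coeff q * poly m x"
    by (subst q) simp
  then show ?thesis
    by (simp add: m_def poly_prod)
qed

text \<open>Solutions y of the three-term recurrence a_(k+1) y_(k+2) = (lam - b_(k+1)) y_(k+1) - a_k y_k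
  with y_0 = q0, y_1 = q1; the rows of the transfer products are of this form.\<close>
fun jacobi_poly :: "(int \<Rightarrow> real) \<Rightarrow> (int \<Rightarrow> real) \<Rightarrow> real poly \<Rightarrow> real poly \<Rightarrow> nat \<Rightarrow> real poly" where
  "jacobi_poly a b q0 q1 0 = q0"
| "jacobi_poly a b q0 q1 (Suc 0) = q1"
| "jacobi_poly a b q0 q1 (Suc (Suc k)) =
     smult (1 / a (int (Suc k))) ([:- b (int (Suc k)), 1:] * jacobi_poly a b q0 q1 (Suc k))
     - smult (a (int k) / a (int (Suc k))) (jacobi_poly a b q0 q1 k)"

lemma transfer_prod_jacobi_poly:
  "transfer_prod a b k lam $ 1 $ 1 = poly (jacobi_poly a b 0 1 (Suc k)) lam \<and>
   transfer_prod a b k lam $ 1 $ 2 = poly (jacobi_poly a b 1 0 (Suc k)) lam \<and>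
   transfer_prod a b k lam $ 2 $ 1 = poly (jacobi_poly a b 0 1 k) lam \<and>
   transfer_prod a b k lam $ 2 $ 2 = poly (jacobi_poly a b 1 0 k) lam"
proof (induction k)
  case 0
  then show ?case by (simp add: mat_def)
next
  case (Suc k)
  then show ?case
    by (simp add: matrix_matrix_mult_def sum_2 transfer_matrix_def algebra_simps diff_divide_distrib)
qed

lemma degree_jacobi_poly_le:
  assumes "degree q0 \<le> degree q1"
  shows "degree (jacobi_poly a b q0 q1 n) \<le> n - 1 + degree q1"
proof (induction n rule: induct_nat_012)
  case (ge2 n)
  have "degree (smult (1 / a (int (Suc n))) ([:- b (int (Suc n)), 1:] * jacobi_poly a b q0 q1 (Suc n)))
          \<le> Suc n + degree q1"
    using ge2.IH(2) degree_mult_le[of "[:- b (int (Suc n)), 1:]" "jacobi_poly a b q0 q1 (Suc n)"]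
    by (auto intro: order.trans[OF degree_smult_le])
  moreover have "degree (smult (a (int n) / a (int (Suc n))) (jacobi_poly a b q0 q1 n)) \<le> Suc n + degree q1"
    using ge2.IH(1) by (auto intro: order.trans[OF degree_smult_le])
  ultimately show ?case
    by (auto intro: order.trans[OF degree_diff_le_max])
qed (use assms in auto)

lemma coeff_jacobi_poly_0_1:
  "coeff (jacobi_poly a b 0 1 (Suc k)) k = 1 / (\<Prod>i=1..k. a (int i))"
proof (induction k)
  case (Suc k)
  have deg: "degree (jacobi_poly a b 0 1 n) \<le> n - 1" for n
    using degree_jacobi_poly_le[of 0 1 a b n] by simp
  have "degree (jacobi_poly a b 0 1 (Suc k)) \<le> k" "degree (jacobi_poly a b 0 1 k) \<le> k"
    using deg[of "Suc k"] deg[of k] by simp_all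
  then have "coeff (jacobi_poly a b 0 1 (Suc (Suc k))) (Suc k)
               = coeff (jacobi_poly a b 0 1 (Suc k)) k / a (int (Suc k))"
    by (simp add: coeff_eq_0)
  then show ?case
    using Suc.IH by (simp add: prod.nat_ivl_Suc' mult.commute del: prod.cl_ivl_Suc)
qed simp

definition discriminant_poly :: "(int \<Rightarrow> real) \<Rightarrow> (int \<Rightarrow> real) \<Rightarrow> nat \<Rightarrow> real poly" where
  "discriminant_poly a b p = jacobi_poly a b 0 1 (Suc p) + jacobi_poly a b 1 0 p"

lemma discriminant_eq_poly: "discriminant a b p lam = poly (discriminant_poly a b p) lam"
  using transfer_prod_jacobi_poly[of a b p lam]
  by (simp add: discriminant_def trace2_def sum_2 discriminant_poly_def)

lemma degree_discriminant_poly: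
  assumes "p \<ge> 1" and "\<And>i. i \<in> {1..p} \<Longrightarrow> a (int i) \<noteq> 0"
  shows "degree (discriminant_poly a b p) = p"
    and "lead_coeff (discriminant_poly a b p) = 1 / (\<Prod>i=1..p. a (int i))"
proof -
  have "degree (jacobi_poly a b 0 1 (Suc p)) \<le> p" "degree (jacobi_poly a b 1 0 p) < p"
    using degree_jacobi_poly_le[of 0 1 a b "Suc p"] degree_jacobi_poly_le[of 1 0 a b p] assms(1)
    by simp_all
  then have le: "degree (discriminant_poly a b p) \<le> p"
    and coeff: "coeff (discriminant_poly a b p) p = 1 / (\<Prod>i=1..p. a (int i))"
    by (simp_all add: discriminant_poly_def coeff_jacobi_poly_0_1 coeff_eq_0 degree_add_le)
  have "coeff (discriminant_poly a b p) p \<noteq> 0"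
    unfolding coeff using assms(2) by simp
  then show deg: "degree (discriminant_poly a b p) = p"
    using le le_degree by (blast intro: antisym)
  show "lead_coeff (discriminant_poly a b p) = 1 / (\<Prod>i=1..p. a (int i))"
    unfolding deg by (rule coeff)
qed

lemma separated_bands:
  fixes lmin lmax :: "nat \<Rightarrow> real"
  assumes "\<forall>n\<in>{1..p}. lmin n < lmax n" and "\<forall>n\<in>{1..<p}. lmin (Suc n) - lmax n \<ge> d"
    and "d \<ge> 0" and "1 \<le> m" "m < n" "n \<le> p"
  shows "lmax m + d \<le> lmin n"
proof -
  from \<open>m < n\<close> have "Suc m \<le> n" by simp
  then show ?thesis
  proof (induction rule: dec_induct)
    case base
    have "m \<in> {1..<p}" using assms(4-6) by simp
    with assms(2) have "d \<le> lmin (Suc m) - lmax m" by blast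
    then show ?case by linarith
  next
    case (step k)
    then have "k \<in> {1..<p}" using assms(4,6) by simp
    then have "lmin k < lmax k" "d \<le> lmin (Suc k) - lmax k"
      using assms(1,2) by auto
    then show ?case using step.IH \<open>d \<ge> 0\<close> by linarith
  qed
qed

lemma abs_prod_ge_separated:
  fixes r :: "'i \<Rightarrow> real"
  assumes "finite I" "m \<in> I" "d \<ge> 0" "\<And>n. n \<in> I - {m} \<Longrightarrow> d \<le> \<bar>x - r n\<bar>"
  shows "\<bar>x - r m\<bar> * d ^ (card I - 1) \<le> \<bar>\<Prod>n\<in>I. x - r n\<bar>"
proof -
  have "d ^ (card I - 1) = (\<Prod>n\<in>I - {m}. d)"
    using assms(1,2) by (simp add: card_Diff_singleton)
  also have "\<dots> \<le> (\<Prod>n\<in>I - {m}. \<bar>x - r n\<bar>)"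
    using assms(3,4) by (intro prod_mono) auto
  finally show ?thesis
    using assms(1,2) by (simp add: prod.remove abs_mult mult_left_mono flip: abs_prod)
qed

lemma discriminant_eq_prod_band_zeros:
  fixes lmin lmax :: "nat \<Rightarrow> real"
  assumes "p \<ge> 1" and a_pos: "\<And>n. a n > 0"
    and bands: "is_band_decomposition a b p lmin lmax"
    and "d > 0" and gaps: "\<forall>n\<in>{1..<p}. lmin (Suc n) - lmax n \<ge> d"
  obtains r where "\<And>n. n \<in> {1..p} \<Longrightarrow> r n \<in> {lmin n..lmax n}"
    and "\<And>lam. discriminant a b p lam = (\<Prod>n=1..p. lam - r n) / (\<Prod>n=1..p. a (int n))"
proof -
  have lt: "\<forall>n\<in>{1..p}. lmin n < lmax n"
    and onto: "\<forall>n\<in>{1..p}. discriminant a b p ` {lmin n..lmax n} = {-2..2}"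
    using bands unfolding is_band_decomposition_def by auto
  have "\<exists>r \<in> {lmin n..lmax n}. discriminant a b p r = 0" if "n \<in> {1..p}" for n
    using onto that by (metis atLeastAtMost_iff imageE neg_le_0_iff_le zero_le_numeral)
  then obtain r where r: "\<And>n. n \<in> {1..p} \<Longrightarrow> r n \<in> {lmin n..lmax n} \<and> discriminant a b p (r n) = 0"
    by metis
  have "inj_on r {1..p}"
  proof (rule linorder_inj_onI)
    fix m n assume "m < n" "m \<in> {1..p}" "n \<in> {1..p}"
    then have "r m \<le> lmax m" "lmax m + d \<le> lmin n" "lmin n \<le> r n"
      using r separated_bands[OF lt gaps] \<open>d > 0\<close> by auto
    then show "r m \<noteq> r n" using \<open>d > 0\<close> by linarith
  qed auto
  have a_ne: "a (int i) \<noteq> 0" for i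
    using a_pos[of "int i"] by simp
  note deg = degree_discriminant_poly[where a = a and b = b, OF \<open>p \<ge> 1\<close> a_ne]
  have card: "card (r ` {1..p}) = degree (discriminant_poly a b p)"
    using \<open>inj_on r {1..p}\<close> deg by (simp add: card_image)
  show ?thesis
  proof (rule that)
    fix lam
    have "poly (discriminant_poly a b p) lam
            = lead_coeff (discriminant_poly a b p) * (\<Prod>x\<in>r ` {1..p}. lam - x)"
      using r card by (intro poly_eq_lead_coeff_prod_roots) (auto simp: discriminant_eq_poly)
    also have "\<dots> = (\<Prod>n=1..p. lam - r n) / (\<Prod>n=1..p. a (int n))"
      using deg prod.reindex[OF \<open>inj_on r {1..p}\<close>, of "\<lambda>x. lam - x"] by (simp add: comp_def)
    finally show "discriminant a b p lam = (\<Prod>n=1..p. lam - r n) / (\<Prod>n=1..p. a (int n))"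
      by (simp add: discriminant_eq_poly)
  qed (use r in blast)
qed

lemma band_length_le:
  fixes lmin lmax :: "nat \<Rightarrow> real"
  assumes "p \<ge> 1" and a_pos: "\<And>n. a n > 0"
    and bands: "is_band_decomposition a b p lmin lmax"
    and "d > 0" and gaps: "\<forall>n\<in>{1..<p}. lmin (Suc n) - lmax n \<ge> d"
    and m: "m \<in> {1..p}"
  shows "(lmax m - lmin m) * d ^ (p - 1) \<le> 4 * (\<Prod>n=1..p. a (int n))"
proof -
  define P where "P = (\<Prod>n=1..p. a (int n))"
  have "P > 0" unfolding P_def using a_pos by (simp add: prod_pos)
  obtain r where r: "\<And>n. n \<in> {1..p} \<Longrightarrow> r n \<in> {lmin n..lmax n}"
    and D: "\<And>lam. discriminant a b p lam = (\<Prod>n=1..p. lam - r n) / P"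
    using discriminant_eq_prod_band_zeros[OF assms(1-5)] unfolding P_def by blast
  have lt: "\<forall>n\<in>{1..p}. lmin n < lmax n"
    and spec: "jacobi_spectrum a b p = (\<Union>n\<in>{1..p}. {lmin n..lmax n})"
    using bands unfolding is_band_decomposition_def by auto
  have near: "\<bar>lam - r m\<bar> * d ^ (p - 1) \<le> 2 * P" if lam: "lam \<in> {lmin m..lmax m}" for lam
  proof -
    have "d \<le> \<bar>lam - r n\<bar>" if "n \<in> {1..p} - {m}" for n
      using that m lam r[of n] separated_bands[OF lt gaps, of m n] separated_bands[OF lt gaps, of n m]
        \<open>d > 0\<close> by (cases "n < m") auto
    then have "\<bar>lam - r m\<bar> * d ^ (p - 1) \<le> \<bar>\<Prod>n=1..p. lam - r n\<bar>"
      using abs_prod_ge_separated[of "{1..p}" m d lam r] m \<open>d > 0\<close> by simp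
    also have "\<dots> = P * \<bar>discriminant a b p lam\<bar>"
      using D \<open>P > 0\<close> by (simp add: abs_mult)
    also have "\<dots> \<le> P * 2"
      using spec m lam \<open>P > 0\<close> by (auto simp: jacobi_spectrum_def)
    finally show ?thesis by simp
  qed
  have "lmin m \<le> r m" "r m \<le> lmax m" "lmin m < lmax m"
    using r[OF m] lt m by auto
  then have "(lmax m - lmin m) * d ^ (p - 1)
               = \<bar>lmin m - r m\<bar> * d ^ (p - 1) + \<bar>lmax m - r m\<bar> * d ^ (p - 1)"
    by (simp add: algebra_simps)
  also have "\<dots> \<le> 4 * P"
    using near[of "lmin m"] near[of "lmax m"] \<open>lmin m < lmax m\<close> by simp
  finally show ?thesis unfolding P_def .
qed

lemma inv_logplus_antimono:
  assumes "0 < x" "x \<le> y"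
  shows "inv_logplus y \<le> inv_logplus x"
  using assms ln_le_cancel_iff[of x y] by (auto simp: inv_logplus_def max_def frac_le)

lemma inv_logplus_le_one: "0 < x \<Longrightarrow> x \<le> 1 \<Longrightarrow> inv_logplus x = \<infinity>"
  by (simp add: inv_logplus_def max_def)

lemma inv_logplus_gt_one: "1 < x \<Longrightarrow> inv_logplus x = ereal (1 / ln x)"
  by (simp add: inv_logplus_def max_def)

lemma sum_inv_logplus_le:
  assumes "0 < x" "n > 0" and le: "\<And>i. i \<in> {1..n} \<Longrightarrow> x ^ n \<le> y i"
  shows "(\<Sum>i=1..n. inv_logplus (y i)) \<le> inv_logplus x"
proof (cases "x \<le> 1")
  case True
  then show ?thesis using \<open>0 < x\<close> by (simp add: inv_logplus_le_one)
next
  case False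
  then have "1 < x ^ n" using \<open>n > 0\<close> by simp
  have "inv_logplus (y i) \<le> ereal (1 / (real n * ln x))" if "i \<in> {1..n}" for i
  proof -
    have "inv_logplus (y i) \<le> inv_logplus (x ^ n)"
      using le[OF that] \<open>1 < x ^ n\<close> by (intro inv_logplus_antimono) auto
    also have "\<dots> = ereal (1 / (real n * ln x))"
      using \<open>1 < x ^ n\<close> \<open>0 < x\<close> by (simp add: inv_logplus_gt_one ln_realpow)
    finally show ?thesis .
  qed
  then have "(\<Sum>i=1..n. inv_logplus (y i)) \<le> (\<Sum>i=1..n. ereal (1 / (real n * ln x)))"
    by (rule sum_mono)
  also have "\<dots> = inv_logplus x"
    using False \<open>n > 0\<close> by (simp add: sum_ereal inv_logplus_gt_one)
  finally show ?thesis .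
qed

lemma root_ratio_power_le_band_ratio:
  fixes lmin lmax :: "nat \<Rightarrow> real"
  assumes "p \<ge> 1" and a_pos: "\<And>n. a n > 0"
    and bands: "is_band_decomposition a b p lmin lmax"
    and "d > 0" and gaps: "\<forall>n\<in>{1..<p}. lmin (Suc n) - lmax n \<ge> d"
    and m: "m \<in> {1..p}"
  shows "(d / (\<Prod>n=1..p. a (int n)) powr (1 / real p)) ^ p \<le> 4 * d / (lmax m - lmin m)"
proof -
  define P where "P = (\<Prod>n=1..p. a (int n))"
  define L where "L = lmax m - lmin m"
  have "P > 0" unfolding P_def using a_pos by (simp add: prod_pos)
  have "L > 0" using bands m by (simp add: is_band_decomposition_def L_def)
  have "L * d ^ (p - 1) \<le> 4 * P"
    using band_length_le[OF assms] by (simp add: P_def L_def)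
  then have "d * (d ^ (p - 1) * L) \<le> d * (4 * P)"
    using \<open>d > 0\<close> by (intro mult_left_mono) (simp_all add: mult.commute)
  moreover have "d ^ p = d * d ^ (p - 1)"
    using \<open>p \<ge> 1\<close> by (simp flip: power_Suc)
  ultimately have "d ^ p * L \<le> 4 * d * P" by (simp add: mult.assoc)
  moreover have "(d / P powr (1 / real p)) ^ p = d ^ p / P"
    using \<open>P > 0\<close> \<open>p \<ge> 1\<close> by (simp add: power_divide powr_power)
  ultimately show ?thesis
    using \<open>P > 0\<close> \<open>L > 0\<close> unfolding P_def [symmetric] L_def [symmetric]
    by (simp add: divide_le_eq le_divide_eq mult.commute mult.left_commute)
qed

theorem theorem1p3:
  fixes a b :: "int \<Rightarrow> real" and p :: nat and lmin lmax :: "nat \<Rightarrow> real" and d :: real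
  assumes hp: "p \<ge> 2"
    and ha_pos: "\<And>n. a n > 0"
    and ha_per: "\<And>n. a (n + int p) = a n"
    and hb_per: "\<And>n. b (n + int p) = b n"
    and hbands: "is_band_decomposition a b p lmin lmax"
    and hd: "d > 0"
    and hgaps: "\<forall>n\<in>{1..<p}. lmin (Suc n) - lmax n \<ge> d"
  shows "inv_logplus (d / (\<Prod>n=1..p. a (int n)) powr (1 / real p))
           \<ge> (\<Sum>n=1..p. inv_logplus (4 * d / (lmax n - lmin n)))"
proof (rule sum_inv_logplus_le)
  have "(\<Prod>n=1..p. a (int n)) > 0" using ha_pos by (simp add: prod_pos)
  then have "(\<Prod>n=1..p. a (int n)) \<noteq> 0" by linarith
  then show "0 < d / (\<Prod>n=1..p. a (int n)) powr (1 / real p)"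
    using hd by (intro divide_pos_pos) (simp_all only: powr_gt_zero not_False_eq_True)
  show "p > 0" using hp by simp
  show "(d / (\<Prod>n=1..p. a (int n)) powr (1 / real p)) ^ p \<le> 4 * d / (lmax m - lmin m)"
    if "m \<in> {1..p}" for m
    using root_ratio_power_le_band_ratio[OF _ ha_pos hbands hd hgaps that] hp by simp
qed

end
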